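(* Let $p=(p_1,\dots,p_K)$ be a probability vector with $p_j>0$ for all $j$, and let $q^1,\dots,q^b$ be probability vectors on $\{1,\dots,K\}$ (so $q^\ell_j\in[0,1]$). Then $$\sum_{j=1}^K\frac{p_j}{1-(1-p_j)(1-q^1_j)\cdots(1-q^b_j)}\le\sum_{j=1}^K\frac{p_j}{p_j+q^1_j+q^2_j+\cdots+q^b_j}+1.$$
   Context: In the paper, $p$ is the agent's arm-selection distribution (positive in every coordinate under the algorithm) and $q^\ell$ the distribution of neighbor $\ell$. *)

theory Defs
  imports "HOL-Analysis.Analysis"
begin

end

theory Submission
  imports Defs
begin

text \<open>For each arm \<open>j\<close>, put \<open>x = p\<^sub>j + \<Sum>\<^sub>l q\<^sup>l\<^sub>j\<close>. The product
  \<open>(1 - p\<^sub>j) \<Prod>\<^sub>l (1 - q\<^sup>l\<^sub>j)\<close> is at most \<open>1 / (1 + x)\<close>, so the denominator on the left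
  is at least \<open>x / (1 + x)\<close> and the \<open>j\<close>-th summand is at most \<open>p\<^sub>j / x + p\<^sub>j\<close>.
  Summing over \<open>j\<close> and using \<open>\<Sum>\<^sub>j p\<^sub>j = 1\<close> gives the claim.\<close>

lemma le_one_if_sum_eq_one:
  fixes f :: "'a \<Rightarrow> 'b::{ordered_comm_monoid_add,semiring_1}"
  assumes "finite A" "\<And>i. i \<in> A \<Longrightarrow> 0 \<le> f i" "sum f A = 1" "i \<in> A"
  shows "f i \<le> 1"
  using member_le_sum[of i A f] assms by simp

lemma one_minus_mult_one_plus_le_one:
  fixes a P S :: "'a::linordered_idom"
  assumes "0 \<le> a" "0 \<le> P" "0 \<le> S" "P * (1 + S) \<le> 1"
  shows "(1 - a) * P * (1 + (a + S)) \<le> 1"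
proof -
  have "(1 - a) * (1 + (a + S)) \<le> 1 + S"
    using assms(1,3) by (simp add: algebra_simps)
  then have "P * ((1 - a) * (1 + (a + S))) \<le> P * (1 + S)"
    using assms(2) by (rule mult_left_mono)
  then show ?thesis
    using assms(4) by (simp add: algebra_simps)
qed

lemma prod_one_minus_mult_one_plus_sum_le_one:
  fixes a :: "'b \<Rightarrow> 'a::linordered_idom"
  assumes "finite A" "\<And>i. i \<in> A \<Longrightarrow> 0 \<le> a i \<and> a i \<le> 1"
  shows "(\<Prod>i\<in>A. 1 - a i) * (1 + (\<Sum>i\<in>A. a i)) \<le> 1"
  using assms
proof (induction A rule: finite_induct)
  case empty
  then show ?case by simp
next
  case (insert x F)
  have "0 \<le> (\<Prod>i\<in>F. 1 - a i)" "0 \<le> (\<Sum>i\<in>F. a i)"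
    using insert.prems by (auto intro: prod_nonneg sum_nonneg)
  with insert show ?case
    using one_minus_mult_one_plus_le_one[of "a x"] by (simp add: mult.assoc)
qed

lemma divide_one_minus_le:
  fixes p c x :: "'a::linordered_field"
  assumes "0 \<le> p" "0 < x" "c * (1 + x) \<le> 1"
  shows "p / (1 - c) \<le> p / x + p"
proof -
  have "x \<le> (1 - c) * (1 + x)"
    using assms(3) by (simp add: algebra_simps)
  then have x_le: "x / (1 + x) \<le> 1 - c"
    using assms(2) by (simp add: pos_divide_le_eq)
  have x_pos: "0 < x / (1 + x)"
    using assms(2) by simp
  with x_le have "0 < 1 - c"
    by linarith
  with x_le x_pos assms(1) have "p / (1 - c) \<le> p / (x / (1 + x))"
    by (intro divide_left_mono mult_pos_pos)
  also have "\<dots> = p / x + p"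
    using assms(2) by (simp add: field_simps)
  finally show ?thesis .
qed

theorem mainTheorem6:
  fixes K b :: nat and p :: "nat \<Rightarrow> real" and q :: "nat \<Rightarrow> nat \<Rightarrow> real"
  assumes p_pos: "\<And>j. j \<in> {1..K} \<Longrightarrow> p j > 0"
    and p_sum: "(\<Sum>j=1..K. p j) = 1"
    and q_nonneg: "\<And>l j. l \<in> {1..b} \<Longrightarrow> j \<in> {1..K} \<Longrightarrow> q l j \<ge> 0"
    and q_sum: "\<And>l. l \<in> {1..b} \<Longrightarrow> (\<Sum>j=1..K. q l j) = 1"
  shows "(\<Sum>j=1..K. p j / (1 - (1 - p j) * (\<Prod>l=1..b. (1 - q l j))))
         \<le> (\<Sum>j=1..K. p j / (p j + (\<Sum>l=1..b. q l j))) + 1"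
proof -
  have "p j / (1 - (1 - p j) * (\<Prod>l=1..b. 1 - q l j)) \<le> p j / (p j + (\<Sum>l=1..b. q l j)) + p j"
    if j: "j \<in> {1..K}" for j
  proof (rule divide_one_minus_le)
    have q_unit: "0 \<le> q l j \<and> q l j \<le> 1" if "l \<in> {1..b}" for l
      using q_nonneg[OF that j] le_one_if_sum_eq_one[of "{1..K}" "q l"] q_nonneg q_sum that j
      by auto
    have q_sum_nonneg: "0 \<le> (\<Sum>l=1..b. q l j)"
      using q_unit by (auto intro: sum_nonneg)
    then show "0 < p j + (\<Sum>l=1..b. q l j)"
      using p_pos[OF j] by linarith
    have "0 \<le> (\<Prod>l=1..b. 1 - q l j)"
      using q_unit by (auto intro: prod_nonneg)
    moreover have "(\<Prod>l=1..b. 1 - q l j) * (1 + (\<Sum>l=1..b. q l j)) \<le> 1"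
      using q_unit by (auto intro: prod_one_minus_mult_one_plus_sum_le_one)
    ultimately show "(1 - p j) * (\<Prod>l=1..b. 1 - q l j) * (1 + (p j + (\<Sum>l=1..b. q l j))) \<le> 1"
      using one_minus_mult_one_plus_le_one[of "p j"] p_pos[OF j] q_sum_nonneg by simp
  qed (use p_pos[OF j] in simp)
  then have "(\<Sum>j=1..K. p j / (1 - (1 - p j) * (\<Prod>l=1..b. 1 - q l j)))
        \<le> (\<Sum>j=1..K. p j / (p j + (\<Sum>l=1..b. q l j)) + p j)"
    by (rule sum_mono)
  then show ?thesis
    using p_sum by (simp add: sum.distrib)
qed

end
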